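(* Let $S$ be a closed subspace of $\ell_\infty$ with $c_0\subseteq S$. If $S$ has weak$^*$ sequentially compact dual ball, then $S$ is not an $\ell_\infty$-Grothendieck subspace.
   Context: A Banach space $X$ has weak$^*$ sequentially compact dual ball if every sequence in the closed unit ball of $X^*$ has a $\sigma(X^*,X)$-convergent subsequence. Let $S$ be a closed subspace of $\ell_\infty$ containing $c_0$ and let $j:c_0\to S$ be the inclusion map; $j^{**}:c_0^{**}\equiv\ell_\infty\to S^{**}$ identifies $\ell_\infty$ with a subspace of $S^{**}$. A sequence $(x_n^* )$ in $S^*$ is $\sigma(S^*,\ell_\infty)$-convergent to $x^*$ if $\langle j^{**}z,x_n^*\rangle\to\langle j^{**}z,x^*\rangle$ for every $z\in\ell_\infty$. The closed subspace $S$ of $\ell_\infty$ is an $\ell_\infty$-Grothendieck subspace if $c_0\subseteq S$ and every $\sigma(S^*,S)$-convergent sequence in $S^*$ is $\sigma(S^*,\ell_\infty)$-convergent (to the same limit). *)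

theory Defs
  imports "HOL-Analysis.Analysis"
begin

text \<open>ell_infinity is modelled as the Banach space of bounded (automatically continuous,
  since nat is discrete) real sequences, with the sup norm.\<close>
type_synonym linf = "nat \<Rightarrow>\<^sub>C real"

definition c0 :: "linf set" where
  "c0 = {x. (\<lambda>n. apply_bcontfun x n) \<longlonglongrightarrow> 0}"

definition unit_seq :: "nat \<Rightarrow> linf" where
  "unit_seq k = Bcontfun (\<lambda>n. if n = k then 1 else 0)"

text \<open>The dual S* of a subspace S: bounded linear functionals on S (only values on S matter).\<close>
definition dual_sp :: "linf set \<Rightarrow> (linf \<Rightarrow> real) set" where
  "dual_sp S = {\<phi>. (\<forall>x\<in>S. \<forall>y\<in>S. \<phi> (x + y) = \<phi> x + \<phi> y)
      \<and> (\<forall>c. \<forall>x\<in>S. \<phi> (c *\<^sub>R x) = c * \<phi> x)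
      \<and> (\<exists>B. \<forall>x\<in>S. \<bar>\<phi> x\<bar> \<le> B * norm x)}"

definition dual_ball :: "linf set \<Rightarrow> (linf \<Rightarrow> real) set" where
  "dual_ball S = {\<phi> \<in> dual_sp S. \<forall>x\<in>S. \<bar>\<phi> x\<bar> \<le> norm x}"

definition weak_star_seq_compact_dual_ball :: "linf set \<Rightarrow> bool" where
  "weak_star_seq_compact_dual_ball S \<longleftrightarrow>
     (\<forall>\<phi> :: nat \<Rightarrow> linf \<Rightarrow> real. (\<forall>n. \<phi> n \<in> dual_ball S) \<longrightarrow>
        (\<exists>(r :: nat \<Rightarrow> nat) \<psi>. strict_mono r \<and> \<psi> \<in> dual_sp S \<and>
                (\<forall>x\<in>S. (\<lambda>n. \<phi> (r n) x) \<longlonglongrightarrow> \<psi> x)))"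

text \<open>Pairing of j** z (z in ell_infinity = c_0**) with x* in S*:
  <j** z, x*> = <z, j* x*> = sum_k z_k x*(e_k), via c_0* = ell_1.\<close>
definition bidual_pair :: "linf \<Rightarrow> (linf \<Rightarrow> real) \<Rightarrow> real" where
  "bidual_pair z \<phi> = (\<Sum>k. apply_bcontfun z k * \<phi> (unit_seq k))"

definition linf_Grothendieck_subspace :: "linf set \<Rightarrow> bool" where
  "linf_Grothendieck_subspace S \<longleftrightarrow> c0 \<subseteq> S \<and>
     (\<forall>(\<phi> :: nat \<Rightarrow> linf \<Rightarrow> real) \<psi>. (\<forall>n. \<phi> n \<in> dual_sp S) \<longrightarrow> \<psi> \<in> dual_sp S \<longrightarrow>
        (\<forall>x\<in>S. (\<lambda>n. \<phi> n x) \<longlonglongrightarrow> \<psi> x) \<longrightarrow>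
        (\<forall>z. (\<lambda>n. bidual_pair z (\<phi> n)) \<longlonglongrightarrow> bidual_pair z \<psi>))"

end

theory Submission
  imports Defs
begin

text \<open>The coordinate functionals \<open>\<delta>\<^sub>n x = x n\<close> lie in the dual ball. If a subsequence
  \<open>\<delta>\<^bsub>r n\<^esub>\<close> converges weak* to \<open>\<psi>\<close>, then \<open>\<psi>\<close> vanishes on the unit vectors \<open>e\<^sub>k \<in> c\<^sub>0\<close>,
  so \<open>\<langle>z, \<psi>\<rangle> = \<Sum>\<^sub>k z\<^sub>k \<psi>(e\<^sub>k) = 0\<close> for every \<open>z \<in> \<ell>\<^sub>\<infinity>\<close>. For the constant sequence
  \<open>z = 1\<close>, however, \<open>\<langle>z, \<delta>\<^bsub>r n\<^esub>\<rangle> = 1\<close>, so the convergence is not \<open>\<sigma>(S*, \<ell>\<^sub>\<infinity>)\<close>-convergence.\<close>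

lemma unit_seq_apply [simp]: "apply_bcontfun (unit_seq k) m = (if m = k then 1 else 0)"
proof -
  have "range (\<lambda>n::nat. if n = k then 1 else (0::real)) \<subseteq> {0, 1}"
    by auto
  then have "bounded (range (\<lambda>n::nat. if n = k then 1 else (0::real)))"
    by (rule bounded_subset[OF finite_imp_bounded, rotated]) simp
  then have "(\<lambda>n::nat. if n = k then 1 else (0::real)) \<in> bcontfun"
    by (simp add: bcontfun_def continuous_on_discrete)
  then show ?thesis
    unfolding unit_seq_def by (simp add: Bcontfun_inverse)
qed

lemma unit_seq_in_c0: "unit_seq k \<in> c0"
proof -
  have "\<forall>\<^sub>F n in sequentially. apply_bcontfun (unit_seq k) n = 0"
    by (rule eventually_sequentiallyI[of "Suc k"]) simp
  then show ?thesis
    unfolding c0_def by (simp add: tendsto_eventually)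
qed

lemma c0_subseq_tendsto_zero:
  assumes "x \<in> c0" and "strict_mono r"
  shows "(\<lambda>n. apply_bcontfun x (r n)) \<longlonglongrightarrow> 0"
  using LIMSEQ_subseq_LIMSEQ[of "apply_bcontfun x" 0 r] assms
  by (simp add: c0_def comp_def)

lemma coordinate_in_dual_ball: "(\<lambda>x. apply_bcontfun x n) \<in> dual_ball S"
proof -
  have bound: "\<bar>apply_bcontfun x n\<bar> \<le> norm x" for x :: linf
    using norm_bounded[of x n] by simp
  then have "\<exists>B. \<forall>x\<in>S. \<bar>apply_bcontfun x n\<bar> \<le> B * norm x"
    by (metis mult_1)
  then show ?thesis
    unfolding dual_ball_def dual_sp_def by (simp add: bound)
qed

lemma bidual_pair_coordinate: "bidual_pair z (\<lambda>x. apply_bcontfun x n) = apply_bcontfun z n"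
proof -
  have "(\<lambda>k. apply_bcontfun z k * apply_bcontfun (unit_seq k) n)
      = (\<lambda>k. if k = n then apply_bcontfun z k else 0)"
    by auto
  then show ?thesis
    unfolding bidual_pair_def using sums_single[of n "apply_bcontfun z"]
    by (simp add: sums_iff)
qed

lemma bidual_pair_eq_0:
  assumes "\<And>k. \<phi> (unit_seq k) = 0"
  shows "bidual_pair z \<phi> = 0"
  unfolding bidual_pair_def by (simp add: assms)

lemma linf_Grothendieck_subspace_no_weak_star_limit_of_coordinates:
  assumes "linf_Grothendieck_subspace S" and "strict_mono r" and "\<psi> \<in> dual_sp S"
  shows "\<not> (\<forall>x\<in>S. (\<lambda>n. apply_bcontfun x (r n)) \<longlonglongrightarrow> \<psi> x)"
proof
  assume conv: "\<forall>x\<in>S. (\<lambda>n. apply_bcontfun x (r n)) \<longlonglongrightarrow> \<psi> x"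
  have "c0 \<subseteq> S"
    using assms(1) by (simp add: linf_Grothendieck_subspace_def)
  have "\<psi> (unit_seq k) = 0" for k
    using conv unit_seq_in_c0 \<open>c0 \<subseteq> S\<close> c0_subseq_tendsto_zero[OF unit_seq_in_c0 assms(2)]
    by (meson LIMSEQ_unique subsetD)
  then have "bidual_pair z \<psi> = 0" for z
    by (rule bidual_pair_eq_0)
  moreover have "(\<lambda>n. bidual_pair z (\<lambda>x. apply_bcontfun x (r n))) \<longlonglongrightarrow> bidual_pair z \<psi>" for z
  proof -
    have "\<forall>n. (\<lambda>x. apply_bcontfun x (r n)) \<in> dual_sp S"
      using coordinate_in_dual_ball by (simp add: dual_ball_def)
    with assms(1,3) conv show ?thesis
      unfolding linf_Grothendieck_subspace_def
      by (elim conjE allE[of _ "\<lambda>n x. apply_bcontfun x (r n)"] allE[of _ \<psi>]) simp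
  qed
  ultimately have "(\<lambda>n. apply_bcontfun z (r n)) \<longlonglongrightarrow> 0" for z :: linf
    by (simp add: bidual_pair_coordinate)
  from this[of "const_bcontfun 1"] show False
    by (simp add: const_bcontfun.rep_eq LIMSEQ_const_iff)
qed

theorem proposition3p6:
  fixes S :: "linf set"
  assumes "subspace S" and "closed S" and "c0 \<subseteq> S"
    and "weak_star_seq_compact_dual_ball S"
  shows "\<not> linf_Grothendieck_subspace S"
proof
  assume "linf_Grothendieck_subspace S"
  obtain r \<psi> where "strict_mono r" and "\<psi> \<in> dual_sp S"
    and "\<forall>x\<in>S. (\<lambda>n. apply_bcontfun x (r n)) \<longlonglongrightarrow> \<psi> x"
    using assms(4) coordinate_in_dual_ball
    unfolding weak_star_seq_compact_dual_ball_def
    by (elim allE[of _ "\<lambda>n x. apply_bcontfun x n"]) blast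
  with \<open>linf_Grothendieck_subspace S\<close> show False
    using linf_Grothendieck_subspace_no_weak_star_limit_of_coordinates by blast
qed

end
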